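(* Let $B_1,\dots,B_D$ be resonator blocks and $\lambda\ge0$. Suppose every block propagation matrix $\mathcal{P}^\lambda_d$ ($d=1,\dots,D$) is hyperbolic and the family $\{\mathcal{P}^\lambda_1,\dots,\mathcal{P}^\lambda_D\}$ satisfies the source-sink condition. Suppose moreover that the line spanned by $(1,0)^\top$ lies in the connected component of $\mathbb{RP}^1\setminus\{s(\mathcal{P}^\lambda_1),\dots,s(\mathcal{P}^\lambda_D)\}$ containing all sinks $u(\mathcal{P}^\lambda_1),\dots,u(\mathcal{P}^\lambda_D)$. Then for every block sequence $\chi\in\{1,\dots,D\}^{\mathbb{Z}}$, the block propagation matrix cocycle $j\mapsto\mathcal{P}^\lambda_{\chi(j)}$ does not admit a uniformly hyperbolic splitting $(u,s)$ with $(1,0)^\top\in s(0)$.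
   Context: A resonator block $B_d$ is a finite sequence of $\mathrm{len}(B_d)\ge1$ triples $(v_k,\ell_k,s_k)$ of positive reals. With $P^\lambda_{\ell,s,v}=\begin{pmatrix}1-s\frac{\ell}{v^2}\lambda & s\\ -\frac{\ell}{v^2}\lambda & 1\end{pmatrix}$, the block propagation matrix is $\mathcal{P}^\lambda_d=P^\lambda_{\ell_L,s_L,v_L}\cdots P^\lambda_{\ell_1,s_1,v_1}\in\mathrm{SL}(2,\mathbb{R})$, $L=\mathrm{len}(B_d)$. $A\in\mathrm{SL}(2,\mathbb{R})$ is hyperbolic if $|\mathrm{tr}A|>2$; then with eigenvalues $|\xi_1|<1<|\xi_2|$ and eigenlines $E_1,E_2$ its source is $s(A)=E_1$ and sink $u(A)=E_2$ in $\mathbb{RP}^1$ (the space of lines in $\mathbb{R}^2$). The source-sink condition for hyperbolic $\{A_1,\dots,A_D\}$: all $u(A_d)$ lie in one connected component of $\mathbb{RP}^1\setminus\{s(A_1),\dots,s(A_D)\}$. A uniformly hyperbolic splitting of a bounded $A:\mathbb{Z}\to\mathrm{SL}(2,\mathbb{R})$ is a pair $s,u:\mathbb{Z}\to\mathbb{RP}^1$ with $A(j)u(j)=u(j+1)$, $A(j)s(j)=s(j+1)$ and constants $C>0,\eta>1$ with $\|A_{-n}(j)\vec u\|,\|A_n(j)\vec s\|\le C\eta^{-n}$ for all $j\in\mathbb{Z}$, $n\in\mathbb{N}$, unit $\vec u\in u(j)$, $\vec s\in s(j)$, where $A_n(j)=A(j+n-1)\cdots A(j)$, $A_{-n}(j)=A(j-n)^{-1}\cdots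 A(j-1)^{-1}$. *)

theory Defs
  imports "HOL-Analysis.Analysis"
begin

type_synonym mat2 = "real^2^2"
type_synonym triple = "real \<times> real \<times> real"   (* (v, l, s) *)

definition Pmat :: "real \<Rightarrow> real \<Rightarrow> real \<Rightarrow> real \<Rightarrow> mat2" where
  "Pmat lam l s v = vector [vector [1 - s * (l / v^2) * lam, s],
                            vector [- (l / v^2) * lam, 1]]"

definition resonator_block :: "triple list \<Rightarrow> bool" where
  "resonator_block B \<longleftrightarrow> B \<noteq> [] \<and>
     (\<forall>(v, l, s) \<in> set B. v > 0 \<and> l > 0 \<and> s > 0)"

(* block propagation matrix P_L ... P_1 (first triple acts first) *)
definition block_mat :: "real \<Rightarrow> triple list \<Rightarrow> mat2" where
  "block_mat lam B = foldl (\<lambda>M (v, l, s). Pmat lam l s v ** M) (mat 1) B"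

definition hyperbolic :: "mat2 \<Rightarrow> bool" where
  "hyperbolic A \<longleftrightarrow> \<bar>trace A\<bar> > 2"

(* lines through the origin = points of RP^1 *)
definition is_line :: "(real^2) set \<Rightarrow> bool" where
  "is_line L \<longleftrightarrow> subspace L \<and> dim L = 1"

definition src :: "mat2 \<Rightarrow> (real^2) set" where
  "src A = {x. \<exists>\<xi>. \<bar>\<xi>\<bar> < 1 \<and> A *v x = \<xi> *\<^sub>R x}"

definition snk :: "mat2 \<Rightarrow> (real^2) set" where
  "snk A = {x. \<exists>\<xi>. \<bar>\<xi>\<bar> > 1 \<and> A *v x = \<xi> *\<^sub>R x}"

(* standard homeomorphism RP^1 -> unit circle: line through (a,b) \<mapsto> ((a+ib)/|a+ib|)^2 *)
definition rp1 :: "(real^2) set \<Rightarrow> complex" where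
  "rp1 L = (let x = (SOME x. x \<in> L \<and> x \<noteq> 0); z = Complex (x$1) (x$2)
            in (z / complex_of_real (cmod z))^2)"

definition source_sink :: "(nat \<Rightarrow> mat2) \<Rightarrow> nat \<Rightarrow> bool" where
  "source_sink A D \<longleftrightarrow>
     (\<exists>C \<in> components (sphere 0 1 - (\<lambda>d. rp1 (src (A d))) ` {1..D}).
        \<forall>d\<in>{1..D}. rp1 (snk (A d)) \<in> C)"

fun fwd :: "(int \<Rightarrow> mat2) \<Rightarrow> int \<Rightarrow> nat \<Rightarrow> mat2" where
  "fwd A j 0 = mat 1"
| "fwd A j (Suc n) = A (j + int n) ** fwd A j n"

fun bwd :: "(int \<Rightarrow> mat2) \<Rightarrow> int \<Rightarrow> nat \<Rightarrow> mat2" where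
  "bwd A j 0 = mat 1"
| "bwd A j (Suc n) = matrix_inv (A (j - int n - 1)) ** bwd A j n"

definition unif_hyp_splitting ::
  "(int \<Rightarrow> mat2) \<Rightarrow> (int \<Rightarrow> (real^2) set) \<Rightarrow> (int \<Rightarrow> (real^2) set) \<Rightarrow> bool" where
  "unif_hyp_splitting A u s \<longleftrightarrow>
     (\<forall>j. is_line (u j) \<and> is_line (s j)) \<and>
     (\<forall>j. (\<lambda>x. A j *v x) ` u j = u (j + 1) \<and> (\<lambda>x. A j *v x) ` s j = s (j + 1)) \<and>
     (\<exists>C>0. \<exists>\<eta>>1. \<forall>j n. \<forall>x y.
        x \<in> u j \<and> norm x = 1 \<and> y \<in> s j \<and> norm y = 1 \<longrightarrow>
          norm (bwd A j n *v x) \<le> C * \<eta> powr (- real n) \<and>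
          norm (fwd A j n *v y) \<le> C * \<eta> powr (- real n))"

end

theory Submission
  imports Defs
begin

(* Each block matrix A_d lies in SL(2,R) and is hyperbolic, with a sink eigenvector u_d and a
   source eigenvector s_d.  Because the sinks and e1 = (1,0) lie in one component of RP^1 minus
   the sources, two lines p, q can be chosen so that the indefinite quadratic form
   Q(v) = (v ^ q)(p ^ v), with ^ the 2x2 determinant, is positive at every sink and at e1 and
   negative at every source.  In an eigenbasis of A_d, with eigenvalues l and 1/l,
   Q(A_d(a u + b s)) - Q(a u + b s) = (l^2 - 1) a^2 Q(u) + (l^-2 - 1) b^2 Q(s) >= 0,
   so Q never decreases along the cocycle.  If e1 lay in the stable direction s(0), its forward
   orbit would tend to 0 and hence Q(e1) <= 0, a contradiction. *)

section \<open>Determinant pairing and the cone form\<close>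

definition wedge :: "real^2 \<Rightarrow> real^2 \<Rightarrow> real" where
  "wedge x y = x$1 * y$2 - x$2 * y$1"

lemma wedge_scaleR_left [simp]: "wedge (c *\<^sub>R x) y = c * wedge x y"
  and wedge_scaleR_right [simp]: "wedge x (c *\<^sub>R y) = c * wedge x y"
  and wedge_add_left [simp]: "wedge (x + x') y = wedge x y + wedge x' y"
  and wedge_add_right [simp]: "wedge x (y + y') = wedge x y + wedge x y'"
  by (simp_all add: wedge_def algebra_simps)

lemma wedge_matrix_vector_mult: "wedge (A *v x) (A *v y) = det A * wedge x y"
  by (simp add: wedge_def matrix_vector_mult_def sum_2 det_2 algebra_simps)

lemma wedge_cramer: "wedge x y *\<^sub>R v = wedge v y *\<^sub>R x + wedge x v *\<^sub>R y"
  by (simp add: vec_eq_iff forall_2 wedge_def algebra_simps)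

lemma wedge_eq_0_imp_parallel:
  assumes "wedge x u = 0" "u \<noteq> 0"
  shows "\<exists>t. x = t *\<^sub>R u"
proof (cases "u$1 = 0")
  case True
  then have "u$2 \<noteq> 0"
    using assms(2) by (auto simp: vec_eq_iff forall_2)
  with assms True show ?thesis
    by (intro exI[of _ "x$2 / u$2"]) (auto simp: vec_eq_iff forall_2 wedge_def field_simps)
next
  case False
  with assms show ?thesis
    by (intro exI[of _ "x$1 / u$1"]) (auto simp: vec_eq_iff forall_2 wedge_def field_simps)
qed

lemma abs_wedge_le: "\<bar>wedge x y\<bar> \<le> norm x * norm y"
proof -
  have "(wedge x y)\<^sup>2 + (x$1 * y$1 + x$2 * y$2)\<^sup>2 = ((x$1)\<^sup>2 + (x$2)\<^sup>2) * ((y$1)\<^sup>2 + (y$2)\<^sup>2)"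
    by (simp add: wedge_def power2_eq_square algebra_simps)
  then have "(wedge x y)\<^sup>2 \<le> ((x$1)\<^sup>2 + (x$2)\<^sup>2) * ((y$1)\<^sup>2 + (y$2)\<^sup>2)"
    by (metis le_add_same_cancel1 zero_le_power2)
  also have "\<dots> = (norm x * norm y)\<^sup>2"
    by (simp add: power_mult_distrib norm_vec_def L2_set_def sum_2)
  finally show ?thesis
    using power2_le_imp_le[of "\<bar>wedge x y\<bar>" "norm x * norm y"] by simp
qed

definition cone_form :: "real^2 \<Rightarrow> real^2 \<Rightarrow> real^2 \<Rightarrow> real" where
  "cone_form p q v = wedge v q * wedge p v"

lemma cone_form_scaleR [simp]: "cone_form p q (c *\<^sub>R v) = c\<^sup>2 * cone_form p q v"
  by (simp add: cone_form_def power2_eq_square)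

lemma abs_cone_form_le: "\<bar>cone_form p q v\<bar> \<le> norm p * norm q * (norm v)\<^sup>2"
proof -
  have "\<bar>cone_form p q v\<bar> = \<bar>wedge v q\<bar> * \<bar>wedge p v\<bar>"
    by (simp add: cone_form_def abs_mult)
  also have "\<dots> \<le> (norm v * norm q) * (norm p * norm v)"
    by (intro mult_mono abs_wedge_le) auto
  finally show ?thesis
    by (simp add: power2_eq_square mult_ac)
qed

lemma cone_form_le_image:
  fixes A :: "real^2^2"
  assumes u: "A *v u = l *\<^sub>R u" and s: "A *v s = n *\<^sub>R s" and ln: "l * n = 1" and l: "1 \<le> \<bar>l\<bar>"
    and us: "wedge u s \<noteq> 0" and gu: "0 \<le> cone_form p q u" and gs: "cone_form p q s \<le> 0"
  shows "cone_form p q v \<le> cone_form p q (A *v v)"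
proof -
  define \<Delta> where "\<Delta> = wedge u s"
  define \<alpha> where "\<alpha> = wedge v s"
  define \<beta> where "\<beta> = wedge u v"
  define M where "M = wedge u q * wedge p s + wedge s q * wedge p u"
  have expand: "cone_form p q (x *\<^sub>R u + y *\<^sub>R s)
      = x\<^sup>2 * cone_form p q u + x * y * M + y\<^sup>2 * cone_form p q s" for x y
    by (simp add: cone_form_def M_def power2_eq_square algebra_simps)
  have v: "\<Delta> *\<^sub>R v = \<alpha> *\<^sub>R u + \<beta> *\<^sub>R s"
    unfolding \<Delta>_def \<alpha>_def \<beta>_def by (rule wedge_cramer)
  have "\<Delta> *\<^sub>R (A *v v) = A *v (\<alpha> *\<^sub>R u + \<beta> *\<^sub>R s)"
    by (simp add: v flip: matrix_vector_mult_scaleR)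
  also have "\<dots> = (l * \<alpha>) *\<^sub>R u + (n * \<beta>) *\<^sub>R s"
    by (simp add: matrix_vector_right_distrib matrix_vector_mult_scaleR u s mult.commute)
  finally have Av: "\<Delta> *\<^sub>R (A *v v) = (l * \<alpha>) *\<^sub>R u + (n * \<beta>) *\<^sub>R s" .
  \<comment> \<open>As \<open>l * n = 1\<close>, the mixed term \<open>M\<close> cancels in the difference.\<close>
  have "\<Delta>\<^sup>2 * (cone_form p q (A *v v) - cone_form p q v)
      = (l\<^sup>2 - 1) * \<alpha>\<^sup>2 * cone_form p q u + (n\<^sup>2 - 1) * \<beta>\<^sup>2 * cone_form p q s"
    using arg_cong[OF Av, of "cone_form p q"] arg_cong[OF v, of "cone_form p q"]
    by (simp add: expand ln power_mult_distrib algebra_simps)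
  also have "\<dots> = (l\<^sup>2 - 1) * (\<alpha>\<^sup>2 * cone_form p q u + n\<^sup>2 * \<beta>\<^sup>2 * (- cone_form p q s))"
    using arg_cong[OF ln, of "\<lambda>x. x\<^sup>2"] by (simp add: power_mult_distrib algebra_simps)
  also have "\<dots> \<ge> 0"
    using l abs_le_square_iff[of 1 l] gu gs by (intro mult_nonneg_nonneg add_nonneg_nonneg) auto
  finally show ?thesis
    using us by (simp add: \<Delta>_def zero_le_mult_iff)
qed

section \<open>Eigenvectors of hyperbolic matrices in SL(2)\<close>

lemma det_Pmat: "det (Pmat lam l s v) = 1"
  by (simp add: Pmat_def det_2 algebra_simps)

lemma det_block_mat: "det (block_mat lam B) = 1"
proof -
  have "det (foldl (\<lambda>M (v, l, s). Pmat lam l s v ** M) M0 B) = det M0" for M0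
    by (induction B arbitrary: M0) (auto simp: det_mul det_Pmat)
  then show ?thesis
    by (simp add: block_mat_def det_I)
qed

lemma eigenvector_of_char_root:
  fixes A :: "real^2^2"
  assumes "\<mu>\<^sup>2 - trace A * \<mu> + det A = 0"
  shows "\<exists>x. x \<noteq> 0 \<and> A *v x = \<mu> *\<^sub>R x"
proof -
  have "det (A - \<mu> *\<^sub>R mat 1) = 0"
    using assms by (simp add: det_2 trace_def sum_2 mat_def power2_eq_square algebra_simps)
  then have "\<not> invertible (A - \<mu> *\<^sub>R mat 1)"
    by (simp add: invertible_det_nz)
  then obtain x where "x \<noteq> 0" "(A - \<mu> *\<^sub>R mat 1) *v x = 0"
    by (auto simp: invertible_left_inverse matrix_left_invertible_ker)
  then show ?thesis
    by (auto simp: matrix_vector_mult_diff_rdistrib simp flip: scaleR_matrix_vector_assoc)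
qed

lemma hyperbolic_SL2_snk_src:
  fixes A :: "real^2^2"
  assumes "det A = 1" and "hyperbolic A"
  shows "\<exists>u. u \<in> snk A \<and> u \<noteq> 0" and "\<exists>s. s \<in> src A \<and> s \<noteq> 0"
proof -
  define t where "t = trace A"
  have t: "2 < \<bar>t\<bar>"
    using assms(2) by (simp add: hyperbolic_def t_def)
  define r where "r = sqrt (t\<^sup>2 - 4)"
  have "2\<^sup>2 < \<bar>t\<bar>\<^sup>2"
    using t by (intro power_strict_mono) auto
  then have r: "r\<^sup>2 = t\<^sup>2 - 4" "0 \<le> r"
    by (simp_all add: r_def)
  \<comment> \<open>The root of \<open>\<mu>\<^sup>2 - t \<mu> + 1\<close> of larger modulus; its inverse is the other root.\<close>
  define l where "l = (t + sgn t * r) / 2"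
  have "(sgn t)\<^sup>2 = 1"
    using t by (auto simp: sgn_real_def)
  then have root: "l\<^sup>2 - t * l + 1 = 0"
    using r by (simp add: l_def power2_eq_square field_simps)
  have "t + sgn t * r = sgn t * (\<bar>t\<bar> + r)"
    by (simp add: distrib_left sgn_mult_abs)
  then have "\<bar>2 * l\<bar> = \<bar>t\<bar> + r"
    using t r by (simp add: l_def abs_mult)
  then have l: "1 < \<bar>l\<bar>"
    using t r by simp
  then have "(inverse l)\<^sup>2 - t * inverse l + 1 = 0"
    using root by (simp add: field_simps power2_eq_square)
  moreover have "\<bar>inverse l\<bar> < 1"
    using l by (simp add: abs_inverse inverse_less_1_iff)
  moreover obtain u where "u \<noteq> 0" "A *v u = l *\<^sub>R u"
    using eigenvector_of_char_root[of l A] root assms(1) by (auto simp: t_def)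
  moreover obtain s where "s \<noteq> 0" "A *v s = inverse l *\<^sub>R s"
    using eigenvector_of_char_root[of "inverse l" A] calculation(1) assms(1) by (auto simp: t_def)
  ultimately show "\<exists>u. u \<in> snk A \<and> u \<noteq> 0" "\<exists>s. s \<in> src A \<and> s \<noteq> 0"
    using l unfolding snk_def src_def by blast+
qed

lemma eigenvectors_parallel:
  fixes A :: "real^2^2"
  assumes "det A = 1" "A *v u = l *\<^sub>R u" "A *v x = k *\<^sub>R x" "l * k \<noteq> 1" "u \<noteq> 0"
  shows "\<exists>t. x = t *\<^sub>R u"
proof -
  have "(k * l - 1) * wedge x u = 0"
    using wedge_matrix_vector_mult[of A x u] assms(1-3) by (simp add: algebra_simps)
  then have "wedge x u = 0"
    using assms(4) by (simp add: mult.commute)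
  then show ?thesis
    using wedge_eq_0_imp_parallel assms(5) by blast
qed

lemma eigenvectors_wedge_nonzero:
  assumes "A *v u = l *\<^sub>R u" "A *v s = n *\<^sub>R s" "l \<noteq> n" "u \<noteq> 0" "s \<noteq> 0"
  shows "wedge u s \<noteq> 0"
proof
  assume "wedge u s = 0"
  then obtain t where t: "s = t *\<^sub>R u"
    using wedge_eq_0_imp_parallel[of s u] assms(4) by (auto simp: wedge_def algebra_simps)
  then have "A *v s = l *\<^sub>R s"
    using assms(1) by (simp add: matrix_vector_mult_scaleR)
  then have "n *\<^sub>R s = l *\<^sub>R s"
    using assms(2) by simp
  with assms(3,5) show False
    by simp
qed

lemma eigenvalues_mult_eq_1:
  fixes A :: "real^2^2"
  assumes "det A = 1" "A *v u = l *\<^sub>R u" "A *v s = n *\<^sub>R s" "wedge u s \<noteq> 0"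
  shows "l * n = 1"
  using wedge_matrix_vector_mult[of A u s] assms by (simp add: mult.commute)

lemma cone_form_le_image_snk_src:
  fixes A :: "real^2^2"
  assumes "det A = 1" "u \<in> snk A" "u \<noteq> 0" "s \<in> src A" "s \<noteq> 0"
    and "0 \<le> cone_form p q u" "cone_form p q s \<le> 0"
  shows "cone_form p q v \<le> cone_form p q (A *v v)"
proof -
  obtain l n where l: "1 < \<bar>l\<bar>" "A *v u = l *\<^sub>R u" and n: "\<bar>n\<bar> < 1" "A *v s = n *\<^sub>R s"
    using assms(2,4) by (auto simp: snk_def src_def)
  then have "wedge u s \<noteq> 0"
    using assms(3,5) by (intro eigenvectors_wedge_nonzero[of A u l s n]) auto
  then have "l * n = 1"
    using eigenvalues_mult_eq_1 assms(1) l(2) n(2) by blast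
  then show ?thesis
    using cone_form_le_image[OF l(2) n(2)] l(1) \<open>wedge u s \<noteq> 0\<close> assms(6,7) by simp
qed

section \<open>Lines as points of the unit circle\<close>

definition complex_of_vec :: "real^2 \<Rightarrow> complex" where
  "complex_of_vec v = Complex (v$1) (v$2)"

definition rp1_vec :: "real^2 \<Rightarrow> complex" where
  "rp1_vec v = (complex_of_vec v / of_real (cmod (complex_of_vec v)))\<^sup>2"

lemma complex_of_vec_scaleR: "complex_of_vec (t *\<^sub>R v) = of_real t * complex_of_vec v"
  by (simp add: complex_of_vec_def complex_eq_iff)

lemma complex_of_vec_eq_0_iff: "complex_of_vec v = 0 \<longleftrightarrow> v = 0"
  by (auto simp: complex_of_vec_def complex_eq_iff vec_eq_iff forall_2)

lemma rp1_vec_scaleR: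
  assumes "t \<noteq> 0"
  shows "rp1_vec (t *\<^sub>R v) = rp1_vec v"
proof -
  have "complex_of_vec (t *\<^sub>R v) / of_real (cmod (complex_of_vec (t *\<^sub>R v)))
      = of_real (t / \<bar>t\<bar>) * (complex_of_vec v / of_real (cmod (complex_of_vec v)))"
    by (simp add: complex_of_vec_scaleR norm_mult)
  then have "rp1_vec (t *\<^sub>R v) = (of_real (t / \<bar>t\<bar>))\<^sup>2 * rp1_vec v"
    unfolding rp1_vec_def by (simp only: power_mult_distrib)
  also have "(of_real (t / \<bar>t\<bar>) :: complex)\<^sup>2 = 1"
    using assms by (simp add: power_divide flip: of_real_power)
  finally show ?thesis
    by simp
qed

lemma norm_rp1_vec: "v \<noteq> 0 \<Longrightarrow> norm (rp1_vec v) = 1"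
  by (simp add: rp1_vec_def norm_power norm_divide complex_of_vec_eq_0_iff)
lemma rp1_eq_rp1_vec:
  assumes "u \<in> L" "u \<noteq> 0" "\<forall>x\<in>L. x \<noteq> 0 \<longrightarrow> (\<exists>t. x = t *\<^sub>R u)"
  shows "rp1 L = rp1_vec u"
proof -
  define x where "x = (SOME x. x \<in> L \<and> x \<noteq> 0)"
  have "x \<in> L \<and> x \<noteq> 0"
    unfolding x_def by (rule someI[of _ u]) (use assms in auto)
  then obtain t where "x = t *\<^sub>R u" "t \<noteq> 0"
    using assms(3) by fastforce
  moreover have "rp1 L = rp1_vec x"
    by (simp add: rp1_def rp1_vec_def complex_of_vec_def x_def Let_def)
  ultimately show ?thesis
    by (simp add: rp1_vec_scaleR)
qed

lemma rp1_span_singleton: "v \<noteq> 0 \<Longrightarrow> rp1 (span {v}) = rp1_vec v"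
  using span_base[of v "{v}"] by (intro rp1_eq_rp1_vec) (auto simp: span_singleton)

lemma rp1_snk:
  fixes A :: "real^2^2"
  assumes "det A = 1" "u \<in> snk A" "u \<noteq> 0"
  shows "rp1 (snk A) = rp1_vec u"
proof (rule rp1_eq_rp1_vec)
  obtain l where l: "1 < \<bar>l\<bar>" "A *v u = l *\<^sub>R u"
    using assms(2) by (auto simp: snk_def)
  show "\<forall>x\<in>snk A. x \<noteq> 0 \<longrightarrow> (\<exists>t. x = t *\<^sub>R u)"
  proof (intro ballI impI)
    fix x assume "x \<in> snk A"
    then obtain k where k: "1 < \<bar>k\<bar>" "A *v x = k *\<^sub>R x"
      by (auto simp: snk_def)
    then have "1 < \<bar>l * k\<bar>"
      using l(1) by (simp add: abs_mult less_1_mult)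
    then show "\<exists>t. x = t *\<^sub>R u"
      using eigenvectors_parallel[OF assms(1) l(2) k(2) _ assms(3)] by auto
  qed
qed (use assms in auto)

lemma rp1_src:
  fixes A :: "real^2^2"
  assumes "det A = 1" "u \<in> src A" "u \<noteq> 0"
  shows "rp1 (src A) = rp1_vec u"
proof (rule rp1_eq_rp1_vec)
  obtain l where l: "\<bar>l\<bar> < 1" "A *v u = l *\<^sub>R u"
    using assms(2) by (auto simp: src_def)
  show "\<forall>x\<in>src A. x \<noteq> 0 \<longrightarrow> (\<exists>t. x = t *\<^sub>R u)"
  proof (intro ballI impI)
    fix x assume "x \<in> src A"
    then obtain k where k: "\<bar>k\<bar> < 1" "A *v x = k *\<^sub>R x"
      by (auto simp: src_def)
    have "\<bar>l\<bar> * \<bar>k\<bar> \<le> \<bar>k\<bar>"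
      using l(1) by (intro mult_left_le_one_le) auto
    then have "\<bar>l * k\<bar> < 1"
      using k(1) by (simp add: abs_mult)
    then show "\<exists>t. x = t *\<^sub>R u"
      using eigenvectors_parallel[OF assms(1) l(2) k(2) _ assms(3)] by auto
  qed
qed (use assms in auto)

definition dir :: "real \<Rightarrow> real^2" where
  "dir a = vector [cos a, sin a]"

lemma complex_of_vec_dir: "complex_of_vec (t *\<^sub>R dir a) = of_real t * cis a"
  by (simp add: complex_of_vec_def dir_def complex_eq_iff)

lemma cone_form_dir: "cone_form (dir a) (dir b) (dir c) = sin (b - c) * sin (c - a)"
  by (simp add: cone_form_def wedge_def dir_def sin_diff mult.commute)

lemma cis_square: "(cis a)\<^sup>2 = cis (2 * a)"
  by (simp only: power2_eq_square cis_mult mult_2)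

lemma rp1_vec_eq_cis_imp_parallel:
  assumes "v \<noteq> 0" "rp1_vec v = cis (2 * a)"
  obtains t where "t \<noteq> 0" "v = t *\<^sub>R dir a"
proof -
  define r where "r = cmod (complex_of_vec v)"
  have r: "r > 0"
    using assms(1) by (simp add: r_def complex_of_vec_eq_0_iff)
  define y where "y = complex_of_vec v / of_real r"
  have v: "complex_of_vec v = of_real r * y"
    using r by (simp add: y_def)
  have "y\<^sup>2 = (cis a)\<^sup>2"
    using assms(2) by (simp add: rp1_vec_def y_def r_def cis_square)
  then have "y = cis a \<or> y = - cis a"
    by (simp add: power2_eq_iff)
  then have "\<exists>t. t \<noteq> 0 \<and> complex_of_vec v = complex_of_vec (t *\<^sub>R dir a)"
  proof
    assume "y = cis a"
    then show ?thesis
      using v r by (intro exI[of _ r]) (simp add: complex_of_vec_dir)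
  next
    assume "y = - cis a"
    then show ?thesis
      using v r complex_of_vec_dir[of "- r" a] by (intro exI[of _ "- r"]) simp
  qed
  moreover have "complex_of_vec x = complex_of_vec x' \<Longrightarrow> x = x'" for x x'
    by (simp add: complex_of_vec_def complex_eq_iff vec_eq_iff forall_2)
  ultimately show ?thesis
    using that by blast
qed

lemma unit_complex_eq_cis_Arg2pi: "norm z = 1 \<Longrightarrow> z = cis (Arg2pi z)"
  by (metis complex_norm_eq_1_exp cis_conv_exp)

lemma parallel_dir_Arg2pi:
  assumes "norm \<sigma> = 1" "v \<noteq> 0"
  obtains t where "t \<noteq> 0" "v = t *\<^sub>R dir (Arg2pi \<sigma> / 2 + Arg2pi (rp1_vec v / \<sigma>) / 2)"
proof (rule rp1_vec_eq_cis_imp_parallel[OF assms(2)])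
  have "norm (rp1_vec v / \<sigma>) = 1"
    using assms by (simp add: norm_rp1_vec norm_divide)
  then have "\<sigma> * (rp1_vec v / \<sigma>) = cis (Arg2pi \<sigma>) * cis (Arg2pi (rp1_vec v / \<sigma>))"
    using assms(1) by (intro arg_cong2[where f = "(*)"] unit_complex_eq_cis_Arg2pi)
  moreover have "\<sigma> \<noteq> 0"
    using assms(1) by auto
  ultimately show "rp1_vec v = cis (2 * (Arg2pi \<sigma> / 2 + Arg2pi (rp1_vec v / \<sigma>) / 2))"
    by (simp add: cis_mult)
next
  show "\<And>t. t \<noteq> 0 \<Longrightarrow> v = t *\<^sub>R dir (Arg2pi \<sigma> / 2 + Arg2pi (rp1_vec v / \<sigma>) / 2) \<Longrightarrow> thesis"
    by (rule that)
qed

lemma sin_half_diff_mult_sign: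
  fixes \<theta> tp tq :: real
  assumes "0 \<le> \<theta>" "\<theta> < 2 * pi" "0 < tp" "tp < tq" "tq < 2 * pi"
  shows "tp < \<theta> \<Longrightarrow> \<theta> < tq \<Longrightarrow> 0 < sin ((tq - \<theta>) / 2) * sin ((\<theta> - tp) / 2)"
    and "\<theta> < tp \<or> tq < \<theta> \<Longrightarrow> sin ((tq - \<theta>) / 2) * sin ((\<theta> - tp) / 2) < 0"
proof -
  have pos: "0 < sin (x / 2)" if "0 < x" "x < 2 * pi" for x
    using that by (intro sin_gt_zero) auto
  have neg: "sin (x / 2) < 0" if "- 2 * pi < x" "x < 0" for x
    using pos[of "- x"] that by simp
  show "tp < \<theta> \<Longrightarrow> \<theta> < tq \<Longrightarrow> 0 < sin ((tq - \<theta>) / 2) * sin ((\<theta> - tp) / 2)"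
    using assms by (intro mult_pos_pos pos) auto
  show "\<theta> < tp \<or> tq < \<theta> \<Longrightarrow> sin ((tq - \<theta>) / 2) * sin ((\<theta> - tp) / 2) < 0"
  proof (elim disjE)
    assume "\<theta> < tp"
    with assms show ?thesis
      by (intro mult_pos_neg pos neg) auto
  next
    assume "tq < \<theta>"
    with assms show ?thesis
      by (intro mult_neg_pos pos neg) auto
  qed
qed

lemma unit_nonneg_Real_eq_1: "norm (z :: complex) = 1 \<Longrightarrow> z \<in> \<real>\<^sub>\<ge>\<^sub>0 \<Longrightarrow> z = 1"
  using power2_eq_1_iff[of "Re z"] by (auto simp: complex_nonneg_Reals_iff complex_eq_iff cmod_def)

lemma Arg2pi_divide_pos:
  assumes "norm c = 1" "norm \<sigma> = 1" "c \<noteq> \<sigma>"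
  shows "0 < Arg2pi (c / \<sigma>)" and "isCont (\<lambda>z. Arg2pi (z / \<sigma>)) c"
proof -
  have "norm (c / \<sigma>) = 1" "c / \<sigma> \<noteq> 1"
    using assms by (auto simp: norm_divide)
  then have "c / \<sigma> \<notin> \<real>\<^sub>\<ge>\<^sub>0"
    using unit_nonneg_Real_eq_1 by blast
  then show "0 < Arg2pi (c / \<sigma>)"
    by (rule Arg2pi_gt_0)
  have "isCont (\<lambda>z. z / \<sigma>) c"
    using assms(2) by (intro continuous_intros) auto
  then show "isCont (\<lambda>z. Arg2pi (z / \<sigma>)) c"
    using isCont_o2 continuous_at_Arg2pi[OF \<open>c / \<sigma> \<notin> \<real>\<^sub>\<ge>\<^sub>0\<close>] by blast
qed

lemma connected_circle_arc:
  fixes C :: "complex set"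
  assumes C: "connected C" "C \<subseteq> sphere 0 1" "\<sigma> \<notin> C" and \<sigma>: "norm \<sigma> = 1"
    and xy: "x \<in> C" "y \<in> C" and z: "norm z = 1"
    and le: "Arg2pi (x / \<sigma>) \<le> Arg2pi (z / \<sigma>)" "Arg2pi (z / \<sigma>) \<le> Arg2pi (y / \<sigma>)"
  shows "z \<in> C"
proof -
  have "continuous_on C (\<lambda>c. Arg2pi (c / \<sigma>))"
    using C \<sigma> by (intro continuous_at_imp_continuous_on ballI Arg2pi_divide_pos(2)) auto
  then have "connected ((\<lambda>c. Arg2pi (c / \<sigma>)) ` C)"
    using C(1) by (rule connected_continuous_image)
  then obtain c where c: "c \<in> C" "Arg2pi (c / \<sigma>) = Arg2pi (z / \<sigma>)"
    using connected_contains_Icc[of _ "Arg2pi (x / \<sigma>)" "Arg2pi (y / \<sigma>)"] xy le by force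
  have "norm (c / \<sigma>) = 1" "norm (z / \<sigma>) = 1"
    using c(1) C(2) z \<sigma> by (auto simp: norm_divide)
  then have "c / \<sigma> = z / \<sigma>"
    using c(2) unit_complex_eq_cis_Arg2pi by metis
  then have "c = z"
    using \<sigma> by (auto simp: divide_cancel_right)
  then show ?thesis
    using c(1) by simp
qed

lemma enlarge_interval_avoiding_finite:
  fixes F :: "real set"
  assumes "finite F" "a < m" "m \<le> M" "M < b" "\<forall>f\<in>F. f < m \<or> M < f"
  obtains tp tq where "a < tp" "tp < m" "M < tq" "tq < b" "\<forall>f\<in>F. f < tp \<or> tq < f"
proof -
  obtain \<delta>1 where "\<delta>1 > 0" and \<delta>1: "\<forall>f\<in>insert a F. f \<noteq> m \<longrightarrow> \<delta>1 \<le> dist m f"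
    using finite_set_avoid[of "insert a F" m] assms(1) by blast
  obtain \<delta>2 where "\<delta>2 > 0" and \<delta>2: "\<forall>f\<in>insert b F. f \<noteq> M \<longrightarrow> \<delta>2 \<le> dist M f"
    using finite_set_avoid[of "insert b F" M] assms(1) by blast
  have below: "f \<le> m - \<delta>1" if "f \<in> insert a F" "f < m" for f
    using \<delta>1 that by (auto simp: dist_real_def)
  have above: "M + \<delta>2 \<le> f" if "f \<in> insert b F" "M < f" for f
    using \<delta>2 that by (auto simp: dist_real_def)
  show ?thesis
  proof (rule that[of "m - \<delta>1 / 2" "M + \<delta>2 / 2"])
    show "\<forall>f\<in>F. f < m - \<delta>1 / 2 \<or> M + \<delta>2 / 2 < f"
      using assms(5) below above \<open>\<delta>1 > 0\<close> \<open>\<delta>2 > 0\<close> by fastforce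
  qed (use assms(2-4) below[of a] above[of b] \<open>\<delta>1 > 0\<close> \<open>\<delta>2 > 0\<close> in auto)
qed

section \<open>A cone separating sinks from sources\<close>

lemma circle_component_arc_gap:
  fixes F Z :: "complex set"
  assumes "finite F" "F \<subseteq> sphere 0 1" "\<sigma> \<in> F" "finite Z" "Z \<noteq> {}"
    and C: "C \<in> components (sphere 0 1 - F)" and ZC: "Z \<subseteq> C"
  obtains tp tq where "0 < tp" "tp < tq" "tq < 2 * pi"
    "\<forall>z\<in>Z. tp < Arg2pi (z / \<sigma>) \<and> Arg2pi (z / \<sigma>) < tq"
    "\<forall>f\<in>F. Arg2pi (f / \<sigma>) < tp \<or> tq < Arg2pi (f / \<sigma>)"
proof -
  have \<sigma>: "norm \<sigma> = 1"
    using assms(2,3) by auto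
  define \<theta> where "\<theta> z = Arg2pi (z / \<sigma>)" for z
  have C_sub: "C \<subseteq> sphere 0 1 - F" and "connected C"
    using in_components_subset[OF C] in_components_connected[OF C] by auto
  have "\<sigma> \<notin> C"
    using C_sub assms(3) by auto
  have Z_sphere: "norm z = 1" if "z \<in> Z" for z
    using that ZC C_sub by auto
  have \<theta>_pos: "0 < \<theta> z" if "z \<in> Z" for z
    using that Z_sphere \<sigma> ZC \<open>\<sigma> \<notin> C\<close> unfolding \<theta>_def by (intro Arg2pi_divide_pos(1)) auto
  define m where "m = Min (\<theta> ` Z)"
  define M where "M = Max (\<theta> ` Z)"
  have "m \<in> \<theta> ` Z" "M \<in> \<theta> ` Z"
    using assms(4,5) unfolding m_def M_def by (intro Min_in Max_in; simp)+
  then obtain zm zM where "zm \<in> Z" "\<theta> zm = m" "zM \<in> Z" "\<theta> zM = M"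
    by (metis imageE)
  have mM: "m \<le> \<theta> z" "\<theta> z \<le> M" if "z \<in> Z" for z
    using that assms(4) by (auto simp: m_def M_def)
  have gap: "\<forall>f\<in>\<theta> ` F. f < m \<or> M < f"
  proof (rule ccontr)
    assume "\<not> ?thesis"
    then obtain f where f: "f \<in> F" "m \<le> \<theta> f" "\<theta> f \<le> M"
      by force
    have "C \<subseteq> sphere 0 1" "zm \<in> C" "zM \<in> C" "norm f = 1"
      using C_sub ZC \<open>zm \<in> Z\<close> \<open>zM \<in> Z\<close> f(1) assms(2) by auto
    then have "f \<in> C"
      using connected_circle_arc[OF \<open>connected C\<close> _ \<open>\<sigma> \<notin> C\<close> \<sigma>] f \<open>\<theta> zm = m\<close> \<open>\<theta> zM = M\<close>
      unfolding \<theta>_def by blast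
    with C_sub f(1) show False
      by blast
  qed
  have "0 < m" "m \<le> M" "M < 2 * pi"
    using \<theta>_pos[OF \<open>zm \<in> Z\<close>] mM(2)[OF \<open>zm \<in> Z\<close>] Arg2pi[of "zM / \<sigma>"] \<open>\<theta> zm = m\<close> \<open>\<theta> zM = M\<close>
    by (simp_all add: \<theta>_def)
  then obtain tp tq where "0 < tp" "tp < m" "M < tq" "tq < 2 * pi" "\<forall>f\<in>\<theta> ` F. f < tp \<or> tq < f"
    using enlarge_interval_avoiding_finite[OF _ _ _ _ gap] assms(1) by blast
  then show ?thesis
    using that[of tp tq] mM \<open>m \<le> M\<close> unfolding \<theta>_def by fastforce
qed

lemma separating_cone_form:
  fixes X Y :: "(real^2) set"
  assumes "finite X" "finite Y" "X \<noteq> {}" "Y \<noteq> {}" "0 \<notin> X" "0 \<notin> Y"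
    and C: "C \<in> components (sphere 0 1 - rp1_vec ` Y)" and XC: "rp1_vec ` X \<subseteq> C"
  obtains p q where "\<forall>x\<in>X. 0 < cone_form p q x" "\<forall>y\<in>Y. cone_form p q y < 0"
proof -
  obtain y0 where "y0 \<in> Y"
    using assms(4) by blast
  define \<sigma> where "\<sigma> = rp1_vec y0"
  have Y_sphere: "rp1_vec ` Y \<subseteq> sphere 0 1"
    using assms(6) by (auto intro!: norm_rp1_vec)
  then have \<sigma>: "norm \<sigma> = 1"
    using \<open>y0 \<in> Y\<close> by (auto simp: \<sigma>_def)
  obtain tp tq where tp_tq: "0 < tp" "tp < tq" "tq < 2 * pi"
    and inside: "\<forall>z\<in>rp1_vec ` X. tp < Arg2pi (z / \<sigma>) \<and> Arg2pi (z / \<sigma>) < tq"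
    and outside: "\<forall>f\<in>rp1_vec ` Y. Arg2pi (f / \<sigma>) < tp \<or> tq < Arg2pi (f / \<sigma>)"
    using circle_component_arc_gap[OF finite_imageI[OF assms(2)] Y_sphere imageI[OF \<open>y0 \<in> Y\<close>]
        finite_imageI[OF assms(1)] _ C XC] assms(3)
    unfolding \<sigma>_def by blast
  \<comment> \<open>\<open>rp1_vec\<close> doubles angles, so the arc from \<open>tp\<close> to \<open>tq\<close> is spanned by the directions
    from \<open>a0 + tp / 2\<close> to \<open>a0 + tq / 2\<close>.\<close>
  define \<theta> where "\<theta> v = Arg2pi (rp1_vec v / \<sigma>)" for v
  define a0 where "a0 = Arg2pi \<sigma> / 2"
  define p where "p = dir (a0 + tp / 2)"
  define q where "q = dir (a0 + tq / 2)"
  have \<theta>_range: "0 \<le> \<theta> v" "\<theta> v < 2 * pi" for v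
    using Arg2pi by (auto simp: \<theta>_def)
  have form: "cone_form p q v = t\<^sup>2 * (sin ((tq - \<theta> v) / 2) * sin ((\<theta> v - tp) / 2))"
    if "v = t *\<^sub>R dir (a0 + \<theta> v / 2)" for v t
  proof -
    from that have "cone_form p q v = cone_form p q (t *\<^sub>R dir (a0 + \<theta> v / 2))"
      by (rule arg_cong)
    also have "\<dots> = t\<^sup>2 * (sin ((tq - \<theta> v) / 2) * sin ((\<theta> v - tp) / 2))"
      by (simp add: p_def q_def cone_form_dir diff_divide_distrib)
    finally show ?thesis .
  qed
  show ?thesis
  proof (rule that)
    show "\<forall>x\<in>X. 0 < cone_form p q x"
    proof
      fix x assume "x \<in> X"
      then have "x \<noteq> 0"
        using assms(5) by blast
      then obtain t where "t \<noteq> 0" and x: "x = t *\<^sub>R dir (a0 + \<theta> x / 2)"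
        by (rule parallel_dir_Arg2pi[OF \<sigma>, folded a0_def \<theta>_def])
      have "0 < sin ((tq - \<theta> x) / 2) * sin ((\<theta> x - tp) / 2)"
        using sin_half_diff_mult_sign(1)[OF \<theta>_range tp_tq] inside \<open>x \<in> X\<close>
        unfolding \<theta>_def by blast
      with \<open>t \<noteq> 0\<close> show "0 < cone_form p q x"
        by (simp add: form[OF x])
    qed
    show "\<forall>y\<in>Y. cone_form p q y < 0"
    proof
      fix y assume "y \<in> Y"
      then have "y \<noteq> 0"
        using assms(6) by blast
      then obtain t where "t \<noteq> 0" and y: "y = t *\<^sub>R dir (a0 + \<theta> y / 2)"
        by (rule parallel_dir_Arg2pi[OF \<sigma>, folded a0_def \<theta>_def])
      have "sin ((tq - \<theta> y) / 2) * sin ((\<theta> y - tp) / 2) < 0"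
        using sin_half_diff_mult_sign(2)[OF \<theta>_range tp_tq] outside \<open>y \<in> Y\<close>
        unfolding \<theta>_def by blast
      with \<open>t \<noteq> 0\<close> show "cone_form p q y < 0"
        by (simp add: form[OF y] mult_pos_neg)
    qed
  qed
qed

lemma hyperbolic_family_cone_form:
  fixes A :: "nat \<Rightarrow> real^2^2"
  assumes "finite I" "I \<noteq> {}" "\<forall>d\<in>I. det (A d) = 1 \<and> hyperbolic (A d)"
    and C: "C \<in> components (sphere 0 1 - (\<lambda>d. rp1 (src (A d))) ` I)"
    and snk_C: "\<forall>d\<in>I. rp1 (snk (A d)) \<in> C" and "e \<noteq> 0" and e_C: "rp1 (span {e}) \<in> C"
  obtains p q where "0 < cone_form p q e" "\<forall>d\<in>I. \<forall>v. cone_form p q v \<le> cone_form p q (A d *v v)"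
proof -
  define U where "U d = (SOME u. u \<in> snk (A d) \<and> u \<noteq> 0)" for d
  define S where "S d = (SOME s. s \<in> src (A d) \<and> s \<noteq> 0)" for d
  have U: "U d \<in> snk (A d)" "U d \<noteq> 0" and S: "S d \<in> src (A d)" "S d \<noteq> 0" if "d \<in> I" for d
    using someI_ex[OF hyperbolic_SL2_snk_src(1)] someI_ex[OF hyperbolic_SL2_snk_src(2)] assms(3) that
    unfolding U_def S_def by blast+
  have "(\<lambda>d. rp1 (src (A d))) ` I = rp1_vec ` S ` I"
    using rp1_src U S assms(3) by (auto simp: image_image intro!: image_cong)
  moreover have "rp1_vec (U d) \<in> C" if "d \<in> I" for d
    using rp1_snk[of "A d" "U d"] U[OF that] assms(3) snk_C that by auto
  then have "rp1_vec ` insert e (U ` I) \<subseteq> C"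
    using rp1_span_singleton[OF \<open>e \<noteq> 0\<close>] e_C by auto
  moreover have "0 \<notin> insert e (U ` I)" "0 \<notin> S ` I"
    using U(2) S(2) \<open>e \<noteq> 0\<close> by (metis imageE insertE)+
  ultimately obtain p q where pos: "\<forall>x\<in>insert e (U ` I). 0 < cone_form p q x"
    and neg: "\<forall>y\<in>S ` I. cone_form p q y < 0"
    using separating_cone_form[of "insert e (U ` I)" "S ` I" C] assms(1,2) C
    by (metis finite_imageI finite_insert image_is_empty insert_not_empty)
  show ?thesis
  proof (rule that)
    show "0 < cone_form p q e"
      using pos by simp
    show "\<forall>d\<in>I. \<forall>v. cone_form p q v \<le> cone_form p q (A d *v v)"
    proof (intro ballI allI)
      fix d v assume "d \<in> I"
      then have "0 \<le> cone_form p q (U d)" "cone_form p q (S d) \<le> 0"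
        using pos neg by (auto intro: less_imp_le)
      then show "cone_form p q v \<le> cone_form p q (A d *v v)"
        using cone_form_le_image_snk_src U[OF \<open>d \<in> I\<close>] S[OF \<open>d \<in> I\<close>] assms(3) \<open>d \<in> I\<close> by blast
    qed
  qed
qed

section \<open>The cone form along the cocycle\<close>

lemma fwd_monotone:
  fixes Q :: "real^2 \<Rightarrow> real"
  assumes "\<And>i v. Q v \<le> Q (A i *v v)"
  shows "Q v \<le> Q (fwd A j n *v v)"
proof (induction n)
  case (Suc n)
  have "fwd A j (Suc n) *v v = A (j + int n) *v (fwd A j n *v v)"
    by (simp add: matrix_vector_mul_assoc)
  with Suc.IH assms show ?case
    by (metis order_trans)
qed simp

lemma is_line_unit_vector:
  assumes "is_line L"
  obtains x where "x \<in> L" "norm x = 1"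
proof -
  have "\<not> L \<subseteq> {0}"
    using assms dim_eq_0[of L] unfolding is_line_def by auto
  then obtain x where "x \<in> L" "x \<noteq> 0"
    by auto
  then show ?thesis
    using assms that[of "x /\<^sub>R norm x"] unfolding is_line_def by (simp add: subspace_scale)
qed

lemma unif_hyp_splitting_stable_tendsto_0:
  assumes "unif_hyp_splitting A u s" "y \<in> s j"
  shows "(\<lambda>n. fwd A j n *v y) \<longlonglongrightarrow> 0"
proof (cases "y = 0")
  case False
  obtain C \<eta> where "\<eta> > 1" and bound: "\<forall>j n. \<forall>x y. x \<in> u j \<and> norm x = 1 \<and> y \<in> s j \<and> norm y = 1 \<longrightarrow>
      norm (bwd A j n *v x) \<le> C * \<eta> powr (- real n) \<and> norm (fwd A j n *v y) \<le> C * \<eta> powr (- real n)"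
    using assms(1) unfolding unif_hyp_splitting_def by blast
  have "is_line (u j)" "is_line (s j)"
    using assms(1) unfolding unif_hyp_splitting_def by blast+
  then obtain x where "x \<in> u j" "norm x = 1"
    using is_line_unit_vector by blast
  have "y /\<^sub>R norm y \<in> s j" "norm (y /\<^sub>R norm y) = 1"
    using assms(2) \<open>is_line (s j)\<close> False unfolding is_line_def by (simp_all add: subspace_scale)
  then have unit: "norm (fwd A j n *v (y /\<^sub>R norm y)) \<le> C * \<eta> powr (- real n)" for n
    using bound \<open>x \<in> u j\<close> \<open>norm x = 1\<close> by blast
  have le: "norm (fwd A j n *v y) \<le> norm y * C * (inverse \<eta>) ^ n" for n
  proof -
    have "fwd A j n *v y = norm y *\<^sub>R (fwd A j n *v (y /\<^sub>R norm y))"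
      using False by (simp add: matrix_vector_mult_scaleR)
    then have "norm (fwd A j n *v y) = norm y * norm (fwd A j n *v (y /\<^sub>R norm y))"
      by simp
    also have "\<dots> \<le> norm y * (C * \<eta> powr (- real n))"
      by (rule mult_left_mono[OF unit]) simp
    also have "\<dots> = norm y * C * (inverse \<eta>) ^ n"
      using \<open>\<eta> > 1\<close> by (simp add: powr_minus powr_realpow power_inverse)
    finally show ?thesis .
  qed
  have lim: "(\<lambda>n. norm y * C * (inverse \<eta>) ^ n) \<longlonglongrightarrow> 0"
    using \<open>\<eta> > 1\<close> by (intro tendsto_mult_right_zero LIMSEQ_power_zero) (simp add: inverse_less_1_iff)
  show ?thesis
    using le by (intro Lim_null_comparison[OF _ lim] always_eventually) blast
qed simp

lemma unif_hyp_splitting_cone_form_stable_nonpos: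
  assumes "unif_hyp_splitting A u s" "y \<in> s j" "\<And>i v. cone_form p q v \<le> cone_form p q (A i *v v)"
  shows "cone_form p q y \<le> 0"
proof (rule LIMSEQ_le_const)
  have "(\<lambda>n. norm (fwd A j n *v y)) \<longlonglongrightarrow> 0"
    using unif_hyp_splitting_stable_tendsto_0[OF assms(1,2)] by (rule tendsto_norm_zero)
  then show "(\<lambda>n. norm p * norm q * (norm (fwd A j n *v y))\<^sup>2) \<longlonglongrightarrow> 0"
    by (intro tendsto_mult_right_zero tendsto_power_zero) auto
  show "\<exists>N. \<forall>n\<ge>N. cone_form p q y \<le> norm p * norm q * (norm (fwd A j n *v y))\<^sup>2"
  proof (intro exI allI impI)
    fix n
    have "cone_form p q y \<le> cone_form p q (fwd A j n *v y)"
      by (rule fwd_monotone) (rule assms(3))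
    also have "\<dots> \<le> norm p * norm q * (norm (fwd A j n *v y))\<^sup>2"
      using abs_cone_form_le abs_le_D1 by blast
    finally show "cone_form p q y \<le> norm p * norm q * (norm (fwd A j n *v y))\<^sup>2" .
  qed
qed

theorem corollary4p5:
  fixes B :: "nat \<Rightarrow> triple list" and D :: nat and lam :: real
  assumes "D \<ge> 1"
    and "\<forall>d\<in>{1..D}. resonator_block (B d)"
    and "lam \<ge> 0"
    and "\<forall>d\<in>{1..D}. hyperbolic (block_mat lam (B d))"
    and "source_sink (\<lambda>d. block_mat lam (B d)) D"
    and "\<exists>C \<in> components (sphere 0 1 - (\<lambda>d. rp1 (src (block_mat lam (B d)))) ` {1..D}).
           (\<forall>d\<in>{1..D}. rp1 (snk (block_mat lam (B d))) \<in> C) \<and>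
           rp1 (span {vector [1, 0] :: real^2}) \<in> C"
  shows "\<forall>chi :: int \<Rightarrow> nat. (\<forall>j. chi j \<in> {1..D}) \<longrightarrow>
           \<not> (\<exists>u s. unif_hyp_splitting (\<lambda>j. block_mat lam (B (chi j))) u s \<and>
                    (vector [1, 0] :: real^2) \<in> s 0)"
proof (intro allI impI notI)
  fix chi :: "int \<Rightarrow> nat"
  assume chi: "\<forall>j. chi j \<in> {1..D}"
  assume "\<exists>u s. unif_hyp_splitting (\<lambda>j. block_mat lam (B (chi j))) u s \<and> (vector [1, 0] :: real^2) \<in> s 0"
  then obtain u s where split: "unif_hyp_splitting (\<lambda>j. block_mat lam (B (chi j))) u s"
    and e_stable: "(vector [1, 0] :: real^2) \<in> s 0"
    by blast
  obtain C where C: "C \<in> components (sphere 0 1 - (\<lambda>d. rp1 (src (block_mat lam (B d)))) ` {1..D})"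
    and snk_C: "\<forall>d\<in>{1..D}. rp1 (snk (block_mat lam (B d))) \<in> C"
    and e_C: "rp1 (span {vector [1, 0] :: real^2}) \<in> C"
    using assms(6) by blast
  have hyp: "\<forall>d\<in>{1..D}. det (block_mat lam (B d)) = 1 \<and> hyperbolic (block_mat lam (B d))"
    using assms(4) det_block_mat by blast
  have "finite {1..D}" "{1..D} \<noteq> {}" "(vector [1, 0] :: real^2) \<noteq> 0"
    using assms(1) by (auto simp: vec_eq_iff forall_2)
  then obtain p q where pos: "0 < cone_form p q (vector [1, 0])"
    and mono: "\<forall>d\<in>{1..D}. \<forall>v. cone_form p q v \<le> cone_form p q (block_mat lam (B d) *v v)"
    using hyperbolic_family_cone_form[where A = "\<lambda>d. block_mat lam (B d)", OF _ _ hyp C snk_C _ e_C]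
    by blast
  have "cone_form p q (vector [1, 0]) \<le> 0"
    using unif_hyp_splitting_cone_form_stable_nonpos[OF split e_stable] mono chi by blast
  with pos show False
    by simp
qed

end
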